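(* Let $\mathbb{K}\in\{\mathbb{R},\mathbb{C}\}$, let $X$ be a linear space over $\mathbb{K}$, let $\phi\colon X\times X\to\mathbb{K}$ be biadditive, and let $Z_0=\{z\in X:\phi(z,z)\neq0\}$ be nonempty. Suppose there is a function $f\colon X\to\mathbb{K}$ with $f(x+y)=f(x)f(y)-\phi(x,y)$ for all $x,y\in X$. Then there is an additive functional $F\colon X\to\mathbb{K}$ with $Z_0=X\setminus\ker F$, and $\phi(x,y)\neq 0$ for all $x,y\in Z_0$.
   Context: A map $\phi\colon X\times X\to\mathbb{K}$ is biadditive if it is additive in each variable separately (no homogeneity assumed); $\ker F=\{x\in X:F(x)=0\}$. *)

theory Defs
  imports "HOL-Analysis.Analysis"
begin

definition biadditive :: "('x::ab_group_add \<Rightarrow> 'x \<Rightarrow> 'k::ab_group_add) \<Rightarrow> bool" where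
  "biadditive \<phi> \<longleftrightarrow> (\<forall>x y z. \<phi> (x + y) z = \<phi> x z + \<phi> y z) \<and>
                     (\<forall>x y z. \<phi> x (y + z) = \<phi> x y + \<phi> x z)"

definition additive_functional :: "('x::plus \<Rightarrow> 'k::plus) \<Rightarrow> bool" where
  "additive_functional F \<longleftrightarrow> (\<forall>x y. F (x + y) = F x + F y)"

definition ker :: "('x \<Rightarrow> 'k::zero) \<Rightarrow> 'x set" where
  "ker F = {x. F x = 0}"

class complex_vector = ab_group_add +
  fixes scaleC :: "complex \<Rightarrow> 'a \<Rightarrow> 'a"
  assumes scaleC_add_right: "scaleC a (x + y) = scaleC a x + scaleC a y"
    and scaleC_add_left: "scaleC (a + b) x = scaleC a x + scaleC b x"
    and scaleC_scaleC: "scaleC a (scaleC b x) = scaleC (a * b) x"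
    and scaleC_one: "scaleC 1 x = x"

end

theory Submission
  imports Defs
begin

text \<open>Comparing the two ways of expanding f (x + y + z) shows that
  \<phi> x y (1 - f z) is symmetric under the cyclic shift (x, y, z) \<mapsto> (y, z, x).
  If \<phi> z0 z0 \<noteq> 0, then f z0 \<noteq> 1, and the identity with z = z0 forces the
  rank-one factorisation \<phi> x y \<phi> z0 z0 = F x F y with F x = \<phi> x z0, an additive
  functional. In particular \<phi> z z \<noteq> 0 exactly when F z \<noteq> 0, and then \<phi> is
  nonzero on pairs of such points.\<close>

lemma biadditive_cyclic_identity:
  fixes \<phi> :: "'x::ab_group_add \<Rightarrow> 'x \<Rightarrow> 'k::comm_ring_1"
  assumes bi: "biadditive \<phi>" and fe: "\<forall>x y. f (x + y) = f x * f y - \<phi> x y"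
  shows "\<phi> x y * (1 - f z) = \<phi> y z * (1 - f x)"
proof -
  have "f ((x + y) + z) = f (x + (y + z))" by (simp add: add.assoc)
  then have "(f x * f y - \<phi> x y) * f z - (\<phi> x z + \<phi> y z)
      = f x * (f y * f z - \<phi> y z) - (\<phi> x y + \<phi> x z)"
    using fe bi unfolding biadditive_def by simp
  then show ?thesis by (simp add: algebra_simps)
qed

lemma nondegenerate_imp_ne_one:
  fixes \<phi> :: "'x::ab_group_add \<Rightarrow> 'x \<Rightarrow> 'k::field"
  assumes bi: "biadditive \<phi>" and fe: "\<forall>x y. f (x + y) = f x * f y - \<phi> x y"
    and z0_nondeg: "\<phi> z0 z0 \<noteq> 0"
  shows "f z0 \<noteq> 1"
proof
  assume "f z0 = 1"
  then have "f x = 1" for x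
    using biadditive_cyclic_identity[OF bi fe, of x z0 z0] z0_nondeg by simp
  then have "\<phi> z0 z0 = 0" using fe[rule_format, of z0 z0] by simp
  with z0_nondeg show False ..
qed

lemma biadditive_rank_one:
  fixes \<phi> :: "'x::ab_group_add \<Rightarrow> 'x \<Rightarrow> 'k::field"
  assumes bi: "biadditive \<phi>" and fe: "\<forall>x y. f (x + y) = f x * f y - \<phi> x y"
    and z0_nondeg: "\<phi> z0 z0 \<noteq> 0"
  shows "\<phi> x y * \<phi> z0 z0 = \<phi> x z0 * \<phi> y z0"
proof -
  note cyclic = biadditive_cyclic_identity[OF bi fe]
  have "\<phi> x y * \<phi> z0 z0 * (1 - f z0) = \<phi> y z0 * (\<phi> z0 z0 * (1 - f x))"
    using cyclic[of x y z0] by (simp add: ac_simps)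
  also have "\<dots> = \<phi> x z0 * \<phi> y z0 * (1 - f z0)"
    using cyclic[of x z0 z0] by (simp add: ac_simps)
  finally show ?thesis
    using nondegenerate_imp_ne_one[OF bi fe z0_nondeg] by simp
qed

lemma additive_functional_biadditive_left:
  assumes "biadditive \<phi>"
  shows "additive_functional (\<lambda>x. \<phi> x z)"
  using assms unfolding biadditive_def additive_functional_def by simp

theorem biadditive_cosine_type_equation:
  fixes \<phi> :: "'x::ab_group_add \<Rightarrow> 'x \<Rightarrow> 'k::field" and f :: "'x \<Rightarrow> 'k"
  assumes bi: "biadditive \<phi>" and ne: "{z. \<phi> z z \<noteq> 0} \<noteq> {}"
    and fe: "\<forall>x y. f (x + y) = f x * f y - \<phi> x y"
  shows "(\<exists>F::'x \<Rightarrow> 'k. additive_functional F \<and> {z. \<phi> z z \<noteq> 0} = UNIV - ker F) \<and>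
         (\<forall>x\<in>{z. \<phi> z z \<noteq> 0}. \<forall>y\<in>{z. \<phi> z z \<noteq> 0}. \<phi> x y \<noteq> 0)"
proof -
  obtain z0 where z0_nondeg: "\<phi> z0 z0 \<noteq> 0" using ne by auto
  define F where "F x = \<phi> x z0" for x
  have rank_one: "\<phi> x y * \<phi> z0 z0 = F x * F y" for x y
    unfolding F_def using biadditive_rank_one[OF bi fe z0_nondeg] .
  have diag: "\<phi> z z \<noteq> 0 \<longleftrightarrow> F z \<noteq> 0" for z
    using rank_one[of z z] z0_nondeg by (metis mult_eq_0_iff)
  have "additive_functional F"
    unfolding F_def using additive_functional_biadditive_left[OF bi] .
  moreover have "{z. \<phi> z z \<noteq> 0} = UNIV - ker F"
    unfolding ker_def using diag by auto
  moreover have "\<phi> x y \<noteq> 0" if "\<phi> x x \<noteq> 0" "\<phi> y y \<noteq> 0" for x y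
  proof -
    have "F x * F y \<noteq> 0" using that diag by simp
    then show ?thesis using rank_one[of x y] by (metis mult_zero_left)
  qed
  ultimately show ?thesis by blast
qed

theorem mainTheorem11:
  shows "(\<forall>(\<phi>::'a::real_vector \<Rightarrow> 'a \<Rightarrow> real) (f::'a \<Rightarrow> real).
            biadditive \<phi> \<longrightarrow> {z. \<phi> z z \<noteq> 0} \<noteq> {} \<longrightarrow>
            (\<forall>x y. f (x + y) = f x * f y - \<phi> x y) \<longrightarrow>
            (\<exists>F::'a \<Rightarrow> real. additive_functional F \<and> {z. \<phi> z z \<noteq> 0} = UNIV - ker F) \<and>
            (\<forall>x\<in>{z. \<phi> z z \<noteq> 0}. \<forall>y\<in>{z. \<phi> z z \<noteq> 0}. \<phi> x y \<noteq> 0))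
       \<and> (\<forall>(\<phi>::'b::complex_vector \<Rightarrow> 'b \<Rightarrow> complex) (f::'b \<Rightarrow> complex).
            biadditive \<phi> \<longrightarrow> {z. \<phi> z z \<noteq> 0} \<noteq> {} \<longrightarrow>
            (\<forall>x y. f (x + y) = f x * f y - \<phi> x y) \<longrightarrow>
            (\<exists>F::'b \<Rightarrow> complex. additive_functional F \<and> {z. \<phi> z z \<noteq> 0} = UNIV - ker F) \<and>
            (\<forall>x\<in>{z. \<phi> z z \<noteq> 0}. \<forall>y\<in>{z. \<phi> z z \<noteq> 0}. \<phi> x y \<noteq> 0))"
  by (rule conjI; intro allI impI; rule biadditive_cosine_type_equation; assumption)

end
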